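(* Let $(X,d)$ be a geodesic metric space and $\epsilon\ge0$ such that for all $x,y\in X$, $s,t\ge0$ with $B(x,s)\cap B(y,t)\ne\emptyset$ there exist $\xi\in X$, $R\ge0$ with $d_H(B(x,s)\cap B(y,t),B(\xi,R))\le\epsilon$. Then for every $q\ge0$, all $x,y\in X$, every $q$-path $\mu$ from $x$ to $y$ and every geodesic $\gamma$ from $x$ to $y$, each point of $\mu$ lies within distance $2q+6\epsilon$ of some point of $\gamma$.
   Context: $B(x,r)=\{z\in X: d(x,z)\le r\}$ denotes the closed ball and $d_H$ the Hausdorff distance. For $q\ge0$, a $q$-path from $x$ to $y$ is a continuous path $\mu$ from $x$ to $y$ such that every point $z$ on $\mu$ satisfies $d(x,z)+d(z,y)\le d(x,y)+q$. *)

theory Defs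
  imports "HOL-Analysis.Analysis"
begin

text \<open>Hausdorff distance between nonempty bounded sets (convention 0 otherwise,
  as in the former HOL-Analysis constant hausdist). It is only applied to nonempty
  bounded sets below.\<close>
definition hausdorff_dist :: "'a::metric_space set \<Rightarrow> 'a set \<Rightarrow> real" where
  "hausdorff_dist S T =
     (if S \<noteq> {} \<and> T \<noteq> {} \<and> bounded S \<and> bounded T
      then max (SUP x\<in>S. infdist x T) (SUP y\<in>T. infdist y S) else 0)"

definition geodesic_from :: "'a::metric_space \<Rightarrow> 'a \<Rightarrow> (real \<Rightarrow> 'a) \<Rightarrow> bool" where
  "geodesic_from x y \<gamma> \<longleftrightarrow> \<gamma> 0 = x \<and> \<gamma> (dist x y) = y \<and>
     (\<forall>s\<in>{0..dist x y}. \<forall>t\<in>{0..dist x y}. dist (\<gamma> s) (\<gamma> t) = \<bar>s - t\<bar>)"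

definition geodesic_space :: "'a::metric_space itself \<Rightarrow> bool" where
  "geodesic_space _ \<longleftrightarrow> (\<forall>x y::'a. \<exists>\<gamma>. geodesic_from x y \<gamma>)"

definition q_path :: "real \<Rightarrow> 'a::metric_space \<Rightarrow> 'a \<Rightarrow> (real \<Rightarrow> 'a) \<Rightarrow> bool" where
  "q_path q x y \<mu> \<longleftrightarrow> path \<mu> \<and> pathstart \<mu> = x \<and> pathfinish \<mu> = y \<and>
     (\<forall>z\<in>path_image \<mu>. dist x z + dist z y \<le> dist x y + q)"

end

theory Submission
  imports Defs
begin

text \<open>Let \<open>z\<close> satisfy \<open>d(x,z) + d(z,y) \<le> d(x,y) + q\<close>. The lens
  \<open>L = B(x, d(x,z)) \<inter> B(y, d(z,y))\<close> contains \<open>z\<close> and a point of \<open>\<gamma>\<close>; let \<open>B(\<xi>,R)\<close> be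
  \<open>\<epsilon>\<close>-close to \<open>L\<close>. Every point of \<open>L\<close> is at distance at least \<open>c = d(x,y) - d(x,z)\<close>
  from \<open>y\<close>. If \<open>c \<le> \<epsilon>\<close>, then \<open>z\<close> is already \<open>q + \<epsilon>\<close>-close to \<open>y\<close>. Otherwise
  \<open>y \<notin> B(\<xi>,R)\<close>, and walking from \<open>\<xi>\<close> towards \<open>y\<close> along a geodesic for a length
  \<open>\<rho> \<le> R\<close> stays in the ball, hence \<open>\<epsilon>\<close>-close to \<open>L\<close>, which forces
  \<open>\<rho> \<le> d(\<xi>,y) + \<epsilon> - c \<le> q + 2\<epsilon>\<close>. So the ball lies in \<open>B(\<xi>, q + 2\<epsilon>)\<close>, every point
  of \<open>L\<close> lies within \<open>q + 3\<epsilon>\<close> of \<open>\<xi>\<close>, and \<open>L\<close> has diameter at most \<open>2q + 6\<epsilon>\<close>.\<close>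

lemma le_infdist:
  assumes "A \<noteq> {}" "\<And>a. a \<in> A \<Longrightarrow> c \<le> dist x a"
  shows "c \<le> infdist x A"
  using assms by (simp add: infdist_notempty cINF_greatest)

lemma dist_le_infdist_plus_radius:
  assumes "A \<noteq> {}" "A \<subseteq> cball y r"
  shows "dist x y \<le> infdist x A + r"
proof -
  have "dist x y - r \<le> dist x a" if "a \<in> A" for a
    using that assms(2) dist_triangle[of x y a] by (auto simp: dist_commute)
  then have "dist x y - r \<le> infdist x A"
    by (rule le_infdist[OF assms(1)])
  then show ?thesis by simp
qed

lemma hausdorff_dist_commute: "hausdorff_dist S T = hausdorff_dist T S"
  unfolding hausdorff_dist_def by (auto simp: max.commute)

lemma bdd_above_infdist_image:
  assumes "bounded S" "T \<noteq> {}"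
  shows "bdd_above ((\<lambda>x. infdist x T) ` S)"
proof -
  obtain c e where ce: "\<And>x. x \<in> S \<Longrightarrow> dist c x \<le> e"
    using assms(1) unfolding bounded_def by auto
  obtain t where t: "t \<in> T" using assms(2) by auto
  have "infdist x T \<le> e + dist c t" if "x \<in> S" for x
    using infdist_le[OF t, of x] dist_triangle3[of x t c] ce[OF that] by linarith
  then show ?thesis by (intro bdd_aboveI2)
qed

lemma infdist_le_hausdorff_dist:
  assumes "S \<noteq> {}" "T \<noteq> {}" "bounded S" "bounded T" "x \<in> S"
  shows "infdist x T \<le> hausdorff_dist S T"
proof -
  have "infdist x T \<le> (SUP x\<in>S. infdist x T)"
    using assms(5) bdd_above_infdist_image[OF assms(3,2)] by (rule cSUP_upper)
  then show ?thesis using assms(1-4) unfolding hausdorff_dist_def by simp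
qed

lemma geodesic_from_dist:
  assumes "geodesic_from x y \<gamma>" "s \<in> {0..dist x y}" "t \<in> {0..dist x y}"
  shows "dist (\<gamma> s) (\<gamma> t) = \<bar>s - t\<bar>"
  using assms unfolding geodesic_from_def by blast

lemma geodesic_from_dist_start:
  assumes "geodesic_from x y \<gamma>" "t \<in> {0..dist x y}"
  shows "dist x (\<gamma> t) = t"
proof -
  have "\<gamma> 0 = x" using assms(1) unfolding geodesic_from_def by blast
  then show ?thesis using geodesic_from_dist[OF assms(1), of 0 t] assms(2) by simp
qed

lemma geodesic_from_dist_finish:
  assumes "geodesic_from x y \<gamma>" "t \<in> {0..dist x y}"
  shows "dist (\<gamma> t) y = dist x y - t"
proof -
  have "\<gamma> (dist x y) = y" using assms(1) unfolding geodesic_from_def by blast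
  then show ?thesis using geodesic_from_dist[OF assms(1), of t "dist x y"] assms(2) by simp
qed

lemma geodesic_meets_lens:
  assumes "geodesic_from x y \<gamma>" "0 \<le> a" "0 \<le> b" "dist x y \<le> a + b"
  shows "\<exists>t\<in>{0..dist x y}. \<gamma> t \<in> cball x a \<inter> cball y b"
proof
  let ?t = "max 0 (dist x y - b)"
  show t: "?t \<in> {0..dist x y}" using assms(3) by auto
  show "\<gamma> ?t \<in> cball x a \<inter> cball y b"
    using geodesic_from_dist_start[OF assms(1) t] geodesic_from_dist_finish[OF assms(1) t] assms
    by (auto simp: dist_commute)
qed

lemma cball_radius_le_if_close_to_far_set:
  fixes \<xi> y u :: "'a::metric_space"
  assumes geo: "geodesic_space TYPE('a)"
    and "I \<noteq> {}"
    and close: "\<And>v. v \<in> cball \<xi> R \<Longrightarrow> infdist v I \<le> \<epsilon>"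
    and far: "\<And>p. p \<in> I \<Longrightarrow> c \<le> dist p y"
    and "\<epsilon> < c"
    and u: "u \<in> cball \<xi> R"
  shows "dist \<xi> u \<le> dist \<xi> y + \<epsilon> - c"
proof -
  have c_le: "c \<le> infdist y I"
    using le_infdist[OF \<open>I \<noteq> {}\<close>] far by (simp add: dist_commute)
  have u_before_y: "dist \<xi> u \<le> dist \<xi> y"
  proof (rule ccontr)
    assume "\<not> dist \<xi> u \<le> dist \<xi> y"
    then have "y \<in> cball \<xi> R" using u by auto
    then show False using close c_le \<open>\<epsilon> < c\<close> by fastforce
  qed
  obtain h where h: "geodesic_from \<xi> y h"
    using geo unfolding geodesic_space_def by blast
  define \<rho> where "\<rho> = dist \<xi> u"
  have \<rho>: "\<rho> \<in> {0..dist \<xi> y}" using u_before_y by (simp add: \<rho>_def)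
  have "h \<rho> \<in> cball \<xi> R"
    using geodesic_from_dist_start[OF h \<rho>] u by (simp add: \<rho>_def)
  then have "infdist (h \<rho>) I \<le> \<epsilon>" by (rule close)
  moreover have "c \<le> infdist (h \<rho>) I + dist y (h \<rho>)"
    using c_le infdist_triangle[of y I "h \<rho>"] by linarith
  moreover have "dist y (h \<rho>) = dist \<xi> y - \<rho>"
    using geodesic_from_dist_finish[OF h \<rho>] by (simp add: dist_commute)
  ultimately show ?thesis unfolding \<rho>_def by linarith
qed

lemma lens_diameter_le:
  fixes x y \<xi> z w :: "'a::metric_space"
  assumes geo: "geodesic_space TYPE('a)"
    and between: "a + b \<le> dist x y + q"
    and far: "\<epsilon> < dist x y - a"
    and "0 \<le> R"
    and H: "hausdorff_dist (cball x a \<inter> cball y b) (cball \<xi> R) \<le> \<epsilon>"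
    and z: "z \<in> cball x a \<inter> cball y b"
    and w: "w \<in> cball x a \<inter> cball y b"
  shows "dist z w \<le> 2 * q + 6 * \<epsilon>"
proof -
  define L where "L = cball x a \<inter> cball y b"
  have ne: "L \<noteq> {}" "cball \<xi> R \<noteq> {}" and "bounded L"
    using z \<open>0 \<le> R\<close> by (auto simp: L_def)
  have to_ball: "infdist p (cball \<xi> R) \<le> \<epsilon>" if "p \<in> L" for p
    using infdist_le_hausdorff_dist[OF ne \<open>bounded L\<close> bounded_cball that] H
    by (simp add: L_def)
  have to_lens: "infdist v L \<le> \<epsilon>" if "v \<in> cball \<xi> R" for v
    using infdist_le_hausdorff_dist[OF ne(2,1) bounded_cball \<open>bounded L\<close> that] H
    by (simp add: L_def hausdorff_dist_commute)
  have "dist \<xi> y \<le> infdist \<xi> L + b"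
    using ne(1) by (rule dist_le_infdist_plus_radius) (auto simp: L_def)
  then have center_y: "dist \<xi> y \<le> \<epsilon> + b"
    using to_lens[of \<xi>] \<open>0 \<le> R\<close> by simp
  have lens_far: "dist x y - a \<le> dist p y" if "p \<in> L" for p
    using that dist_triangle[of x y p] by (simp add: L_def)
  have "dist \<xi> v \<le> q + 2 * \<epsilon>" if "v \<in> cball \<xi> R" for v
    using cball_radius_le_if_close_to_far_set[OF geo ne(1) to_lens lens_far far that]
      center_y between by linarith
  then have small_ball: "cball \<xi> R \<subseteq> cball \<xi> (q + 2 * \<epsilon>)" by auto
  have near_center: "dist p \<xi> \<le> q + 3 * \<epsilon>" if "p \<in> L" for p
    using dist_le_infdist_plus_radius[OF ne(2) small_ball, of p] to_ball[OF that] by linarith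
  show ?thesis
    using near_center[of z] near_center[of w] z w dist_triangle3[of z w \<xi>]
    by (simp add: L_def dist_commute)
qed

theorem lemma3p4:
  fixes \<epsilon> :: real
  assumes geo: "geodesic_space TYPE('a::metric_space)"
    and eps: "\<epsilon> \<ge> 0"
    and balls: "\<And>x y :: 'a. \<And>s t :: real. s \<ge> 0 \<Longrightarrow> t \<ge> 0 \<Longrightarrow>
        cball x s \<inter> cball y t \<noteq> {} \<Longrightarrow>
        \<exists>\<xi> R. R \<ge> 0 \<and> hausdorff_dist (cball x s \<inter> cball y t) (cball \<xi> R) \<le> \<epsilon>"
  shows "\<forall>q \<ge> 0. \<forall>x y :: 'a. \<forall>\<mu> \<gamma>. q_path q x y \<mu> \<longrightarrow> geodesic_from x y \<gamma> \<longrightarrow>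
           (\<forall>z\<in>path_image \<mu>. \<exists>w\<in>\<gamma> ` {0..dist x y}. dist z w \<le> 2 * q + 6 * \<epsilon>)"
proof (intro allI impI ballI)
  fix q :: real and x y :: 'a and \<mu> \<gamma> z
  assume "q \<ge> 0" "q_path q x y \<mu>" and \<gamma>: "geodesic_from x y \<gamma>" and "z \<in> path_image \<mu>"
  then have between: "dist x z + dist z y \<le> dist x y + q"
    unfolding q_path_def by blast
  show "\<exists>w\<in>\<gamma> ` {0..dist x y}. dist z w \<le> 2 * q + 6 * \<epsilon>"
  proof (cases "dist x y - dist x z \<le> \<epsilon>")
    case True
    have "y = \<gamma> (dist x y)" using \<gamma> unfolding geodesic_from_def by simp
    then have "y \<in> \<gamma> ` {0..dist x y}" by simp
    moreover have "dist z y \<le> 2 * q + 6 * \<epsilon>"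
      using True between \<open>q \<ge> 0\<close> eps by linarith
    ultimately show ?thesis by blast
  next
    case False
    let ?L = "cball x (dist x z) \<inter> cball y (dist z y)"
    have z: "z \<in> ?L" by (simp add: dist_commute)
    obtain t where t: "t \<in> {0..dist x y}" "\<gamma> t \<in> ?L"
      using geodesic_meets_lens[OF \<gamma> zero_le_dist zero_le_dist dist_triangle[of x y z]] by blast
    obtain \<xi> R where "R \<ge> 0" "hausdorff_dist ?L (cball \<xi> R) \<le> \<epsilon>"
      using balls[OF zero_le_dist zero_le_dist] z by blast
    then have "dist z (\<gamma> t) \<le> 2 * q + 6 * \<epsilon>"
      using lens_diameter_le[OF geo between] False z t(2) by simp
    then show ?thesis using t(1) by blast
  qed
qed

end
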